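(* Let $I,J\subset S$ be Borel ideals such that $I_s\subseteq J_s$ for all $s\gg0$ and $p_{S/I}(z)=p_{S/J}(z)+a$ for some $a\in\mathbb N$. Then $I$ and $J$ have the same $x_1$-saturation, i.e. $I_{x_0x_1}=J_{x_0x_1}$.
   Context: $S=K[x_0,\dots,x_n]$, $K$ algebraically closed of characteristic $0$, standard grading, $x_0<x_1<\dots<x_n$. A monomial ideal is Borel if $x^\alpha\in J$, $\alpha_j>0$, $j<n$ imply $x^\alpha x_{j+1}/x_j\in J$. For a Borel ideal $J$, its $x_1$-saturation $J_{x_0x_1}$ is the ideal generated by the terms obtained by setting $x_0=x_1=1$ in the minimal monomial generators of $J$. $p_{S/I}(z)$ denotes the Hilbert polynomial of $S/I$. *)

theory Defs
  imports "HOL-Computational_Algebra.Polynomial"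
begin

text \<open>Monomials (terms) of S = K[x_0,...,x_n] are encoded by their exponent vectors
  alpha :: nat => nat with alpha i = 0 for i > n. A monomial ideal of S is determined by
  the set of monomials it contains, which is an upward closed (under divisibility) set of
  exponent vectors; we represent monomial ideals by this set.\<close>

definition mons :: "nat \<Rightarrow> (nat \<Rightarrow> nat) set" where
  "mons n = {\<alpha>. \<forall>i>n. \<alpha> i = 0}"

definition mdeg :: "nat \<Rightarrow> (nat \<Rightarrow> nat) \<Rightarrow> nat" where
  "mdeg n \<alpha> = (\<Sum>i\<le>n. \<alpha> i)"

definition monomial_ideal :: "nat \<Rightarrow> (nat \<Rightarrow> nat) set \<Rightarrow> bool" where
  "monomial_ideal n J \<longleftrightarrow> J \<subseteq> mons n \<and>
     (\<forall>\<alpha>\<in>J. \<forall>\<beta>\<in>mons n. (\<lambda>i. \<alpha> i + \<beta> i) \<in> J)"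

definition borel_ideal :: "nat \<Rightarrow> (nat \<Rightarrow> nat) set \<Rightarrow> bool" where
  "borel_ideal n J \<longleftrightarrow> monomial_ideal n J \<and>
     (\<forall>\<alpha>\<in>J. \<forall>j<n. \<alpha> j > 0 \<longrightarrow> \<alpha>(j := \<alpha> j - 1, Suc j := \<alpha> (Suc j) + 1) \<in> J)"

text \<open>Hilbert function of S/J: dim_K (S/J)_s = number of degree-s monomials not in J.\<close>
definition hilb_fun :: "nat \<Rightarrow> (nat \<Rightarrow> nat) set \<Rightarrow> nat \<Rightarrow> nat" where
  "hilb_fun n J s = card {\<alpha>\<in>mons n. mdeg n \<alpha> = s \<and> \<alpha> \<notin> J}"

definition hilb_poly :: "nat \<Rightarrow> (nat \<Rightarrow> nat) set \<Rightarrow> rat poly" where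
  "hilb_poly n J = (THE p. \<exists>s0. \<forall>s\<ge>s0. poly p (of_nat s) = of_nat (hilb_fun n J s))"

definition min_gens :: "(nat \<Rightarrow> nat) set \<Rightarrow> (nat \<Rightarrow> nat) set" where
  "min_gens J = {\<alpha>\<in>J. \<forall>\<beta>\<in>J. (\<forall>i. \<beta> i \<le> \<alpha> i) \<longrightarrow> \<beta> = \<alpha>}"

definition mon_gen :: "nat \<Rightarrow> (nat \<Rightarrow> nat) set \<Rightarrow> (nat \<Rightarrow> nat) set" where
  "mon_gen n G = {\<gamma>\<in>mons n. \<exists>g\<in>G. \<forall>i. g i \<le> \<gamma> i}"

text \<open>x_1-saturation J_{x0 x1}: generated by minimal generators with x_0 = x_1 = 1.\<close>
definition sat01 :: "nat \<Rightarrow> (nat \<Rightarrow> nat) set \<Rightarrow> (nat \<Rightarrow> nat) set" where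
  "sat01 n J = mon_gen n ((\<lambda>\<alpha>. \<alpha>(0 := 0, 1 := 0)) ` min_gens J)"

end

theory Submission
  imports Defs
begin

(* Let J : (x_0 x_1)^oo be the set of monomials m with (x_0 x_1)^k m in J for some k.
   For a monomial ideal this colon ideal equals the x_1-saturation sat01, so we compare the colon
   ideals of I and J.
   - Since I is contained in J in high degrees, multiplying by a high power of x_0 x_1 shows
     I : (x_0 x_1)^oo is contained in J : (x_0 x_1)^oo.
   - The Hilbert polynomials force h_{S/I}(s) = h_{S/J}(s) + a for s >> 0, i.e. in every high degree
     exactly a monomials lie in J but not in I.  If gamma were in J : (x_0 x_1)^oo but not in
     I : (x_0 x_1)^oo, the r + 1 monomials x_0^(k+i) x_1^(k+r-i) gamma (0 <= i <= r) would all lie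
     in J and, as the Borel ideal I is closed under moving x_0's to x_1, none of them in I;
     r > a gives a contradiction. *)

definition deg_mons :: "nat \<Rightarrow> nat \<Rightarrow> (nat \<Rightarrow> nat) set" where
  "deg_mons n s = {\<alpha>\<in>mons n. mdeg n \<alpha> = s}"

text \<open>Exponents of a degree-s monomial are bounded by s, so there are finitely many of them.\<close>
lemma finite_deg_mons: "finite (deg_mons n s)"
proof (rule finite_subset)
  show "deg_mons n s \<subseteq> {f. \<forall>x. (x \<in> {..n} \<longrightarrow> f x \<in> {..s}) \<and> (x \<notin> {..n} \<longrightarrow> f x = 0)}"
  proof
    fix \<alpha> assume \<alpha>: "\<alpha> \<in> deg_mons n s"
    have "\<alpha> i \<le> s" if "i \<le> n" for i
    proof -
      have "\<alpha> i \<le> (\<Sum>j\<le>n. \<alpha> j)" using that by (intro member_le_sum) auto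
      then show ?thesis using \<alpha> by (simp add: deg_mons_def mdeg_def)
    qed
    then show "\<alpha> \<in> {f. \<forall>x. (x \<in> {..n} \<longrightarrow> f x \<in> {..s}) \<and> (x \<notin> {..n} \<longrightarrow> f x = 0)}"
      using \<alpha> by (auto simp: deg_mons_def mons_def)
  qed
  show "finite {f. \<forall>x. (x \<in> {..n} \<longrightarrow> f x \<in> {..s}) \<and> (x \<notin> {..n} \<longrightarrow> f x = (0::nat))}"
    by (rule finite_set_of_finite_funs) auto
qed

lemma card_deg_mons_slice:
  assumes "j \<le> s"
  shows "card {\<alpha>\<in>deg_mons (Suc n) s. \<alpha> (Suc n) = j} = card (deg_mons n (s - j))"
proof -
  have mdeg_Suc: "mdeg (Suc n) \<alpha> = mdeg n \<alpha> + \<alpha> (Suc n)" for \<alpha>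
    by (simp add: mdeg_def)
  have mdeg_upd: "mdeg n (\<alpha>(Suc n := x)) = mdeg n \<alpha>" for \<alpha> x
    by (simp add: mdeg_def)
  have "bij_betw (\<lambda>\<alpha>. \<alpha>(Suc n := 0)) {\<alpha>\<in>deg_mons (Suc n) s. \<alpha> (Suc n) = j} (deg_mons n (s - j))"
    by (rule bij_betw_byWitness[where f'="\<lambda>\<beta>. \<beta>(Suc n := j)"])
       (use assms mdeg_Suc in \<open>auto simp: deg_mons_def mons_def mdeg_upd\<close>)
  then show ?thesis by (rule bij_betw_same_card)
qed

lemma card_deg_mons: "card (deg_mons n s) = (n + s choose s)"
proof (induction n arbitrary: s)
  case 0
  have "deg_mons 0 s = {(\<lambda>i. 0)(0 := s)}"
    by (auto simp: deg_mons_def mons_def mdeg_def fun_eq_iff)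
  then show ?case by simp
next
  case (Suc n)
  let ?slice = "\<lambda>j. {\<alpha>\<in>deg_mons (Suc n) s. \<alpha> (Suc n) = j}"
  have "deg_mons (Suc n) s = (\<Union>j\<le>s. ?slice j)"
    by (auto simp: deg_mons_def mdeg_def)
  moreover have "card (\<Union>j\<le>s. ?slice j) = (\<Sum>j\<le>s. card (?slice j))"
    by (rule card_UN_disjoint) (auto simp: finite_deg_mons)
  ultimately have "card (deg_mons (Suc n) s) = (\<Sum>j\<le>s. card (?slice j))"
    by simp
  also have "\<dots> = (\<Sum>j\<le>s. (n + (s - j) choose (s - j)))"
    by (simp add: card_deg_mons_slice Suc)
  also have "\<dots> = (\<Sum>k\<le>s. (n + k choose k))"
    by (rule sum.reindex_bij_witness[where i="\<lambda>k. s - k" and j="\<lambda>k. s - k"]) auto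
  also have "\<dots> = (Suc n + s choose s)" by (simp add: sum_choose_lower)
  finally show ?case .
qed

section \<open>Eventually polynomial functions\<close>

definition eventually_poly :: "(nat \<Rightarrow> int) \<Rightarrow> bool" where
  "eventually_poly f \<longleftrightarrow> (\<exists>p::rat poly. \<exists>s0. \<forall>s\<ge>s0. poly p (of_nat s) = of_int (f s))"

lemma eventually_poly_const: "eventually_poly (\<lambda>s. c)"
  unfolding eventually_poly_def by (rule exI[of _ "[:of_int c:]"]) simp

lemma eventually_poly_add:
  assumes "eventually_poly f" "eventually_poly g"
  shows "eventually_poly (\<lambda>s. f s + g s)"
proof -
  obtain p q s0 s1 where "\<forall>s\<ge>s0. poly p (of_nat s) = (of_int (f s) :: rat)"
    and "\<forall>s\<ge>s1. poly q (of_nat s) = (of_int (g s) :: rat)"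
    using assms unfolding eventually_poly_def by blast
  then have "\<forall>s\<ge>max s0 s1. poly (p + q) (of_nat s) = of_int (f s + g s)" by simp
  then show ?thesis unfolding eventually_poly_def by blast
qed

lemma eventually_poly_diff:
  assumes "eventually_poly f" "eventually_poly g"
  shows "eventually_poly (\<lambda>s. f s - g s)"
proof -
  obtain p q s0 s1 where "\<forall>s\<ge>s0. poly p (of_nat s) = (of_int (f s) :: rat)"
    and "\<forall>s\<ge>s1. poly q (of_nat s) = (of_int (g s) :: rat)"
    using assms unfolding eventually_poly_def by blast
  then have "\<forall>s\<ge>max s0 s1. poly (p - q) (of_nat s) = of_int (f s - g s)" by simp
  then show ?thesis unfolding eventually_poly_def by blast
qed

lemma eventually_poly_cong:
  assumes "eventually_poly f" "\<And>s. s \<ge> m \<Longrightarrow> g s = f s"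
  shows "eventually_poly g"
proof -
  obtain p s0 where "\<forall>s\<ge>s0. poly p (of_nat s) = (of_int (f s) :: rat)"
    using assms(1) unfolding eventually_poly_def by blast
  then have "\<forall>s\<ge>max s0 m. poly p (of_nat s) = (of_int (g s) :: rat)" using assms(2) by simp
  then show ?thesis unfolding eventually_poly_def by blast
qed

lemma eventually_poly_shift:
  assumes "eventually_poly f"
  shows "eventually_poly (\<lambda>s. if d \<le> s then f (s - d) else 0)"
proof -
  obtain p s0 where p: "\<forall>s\<ge>s0. poly p (of_nat s) = (of_int (f s) :: rat)"
    using assms unfolding eventually_poly_def by blast
  have "poly (pcompose p [:- of_nat d, 1:]) (of_nat s) = (of_int (if d \<le> s then f (s - d) else 0) :: rat)"
    if s: "s0 + d \<le> s" for s
  proof -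
    have "poly (pcompose p [:- of_nat d, 1:]) (of_nat s) = poly p (of_nat (s - d))"
      using s by (simp add: poly_pcompose of_nat_diff)
    also have "\<dots> = of_int (f (s - d))" using p s by (metis add_le_imp_le_diff)
    finally show ?thesis using s by simp
  qed
  then show ?thesis unfolding eventually_poly_def by blast
qed

text \<open>binomial(n + s, n) is a polynomial of degree n in s: multiply by (s + n + 1) / (n + 1).\<close>
lemma binomial_is_poly: "\<exists>p::rat poly. \<forall>s. poly p (of_nat s) = of_nat (n + s choose n)"
proof (induction n)
  case 0
  show ?case by (rule exI[of _ 1]) simp
next
  case (Suc n)
  then obtain p :: "rat poly" where p: "\<forall>s. poly p (of_nat s) = of_nat (n + s choose n)" by blast
  have "poly (smult (1 / (of_nat n + 1)) ([:of_nat n + 1, 1:] * p)) (of_nat s)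
      = of_nat (Suc n + s choose Suc n)" for s
  proof -
    have "Suc (n + s) * (n + s choose n) = (Suc (n + s) choose Suc n) * Suc n"
      by (rule Suc_times_binomial_eq)
    then have "(of_nat (Suc (n + s)) :: rat) * of_nat (n + s choose n)
        = of_nat (Suc (n + s) choose Suc n) * of_nat (Suc n)"
      by (metis of_nat_mult)
    then show ?thesis using p by (simp add: field_simps)
  qed
  then show ?case by blast
qed

lemma eventually_poly_card_deg_mons: "eventually_poly (\<lambda>s. int (card (deg_mons n s)))"
proof -
  obtain p :: "rat poly" where p: "\<forall>s. poly p (of_nat s) = of_nat (n + s choose n)"
    using binomial_is_poly by blast
  have "\<forall>s\<ge>0. poly p (of_nat s) = of_int (int (card (deg_mons n s)))"
    using p by (simp add: card_deg_mons binomial_symmetric[of s "n + s" for s])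
  then show ?thesis unfolding eventually_poly_def by blast
qed

lemma monomial_ideal_upward:
  assumes "monomial_ideal n J" "g \<in> J" "\<delta> \<in> mons n" "\<And>i. g i \<le> \<delta> i"
  shows "\<delta> \<in> J"
proof -
  have "(\<lambda>i. \<delta> i - g i) \<in> mons n" using assms(3) by (simp add: mons_def)
  then have "(\<lambda>i. g i + (\<delta> i - g i)) \<in> J" using assms(1,2) by (simp add: monomial_ideal_def)
  moreover have "(\<lambda>i. g i + (\<delta> i - g i)) = \<delta>" using assms(4) by (simp add: fun_eq_iff)
  ultimately show ?thesis by simp
qed

text \<open>Every other
  element of A is below the fixed element a in some coordinate of K; fixing that coordinate
  leaves an antichain varying in fewer coordinates.\<close>
lemma finite_antichain:
  fixes A :: "(nat \<Rightarrow> nat) set"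
  assumes "finite K"
    and "\<And>b c i. b \<in> A \<Longrightarrow> c \<in> A \<Longrightarrow> i \<notin> K \<Longrightarrow> b i = c i"
    and "\<And>b c. b \<in> A \<Longrightarrow> c \<in> A \<Longrightarrow> (\<forall>i. b i \<le> c i) \<Longrightarrow> b = c"
  shows "finite A"
  using assms
proof (induction "card K" arbitrary: K A rule: less_induct)
  case less
  show ?case
  proof (cases "A = {}")
    case False
    then obtain a where aA: "a \<in> A" by blast
    have cover: "A \<subseteq> insert a (\<Union>i\<in>K. \<Union>v\<in>{..<a i}. {b\<in>A. b i = v})"
    proof
      fix b assume bA: "b \<in> A"
      show "b \<in> insert a (\<Union>i\<in>K. \<Union>v\<in>{..<a i}. {b\<in>A. b i = v})"
      proof (cases "b = a")
        case False
        then obtain i where i: "b i < a i" using less.prems(3)[OF aA bA] False by (metis not_le)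
        then have "i \<in> K" using less.prems(2)[OF aA bA] by (metis less_irrefl)
        then show ?thesis using i bA by blast
      qed simp
    qed
    have "finite {b\<in>A. b i = v}" if "i \<in> K" for i v
    proof (rule less.hyps)
      show "card (K - {i}) < card K" using that less.prems(1) by (meson card_Diff1_less)
    qed (use less.prems in auto)
    then have "finite (insert a (\<Union>i\<in>K. \<Union>v\<in>{..<a i}. {b\<in>A. b i = v}))"
      using less.prems(1) by auto
    then show ?thesis using cover finite_subset by blast
  qed simp
qed

text \<open>Minimal generators form an antichain varying only in x_0, ..., x_n, hence are finite.\<close>
lemma finite_min_gens:
  assumes "J \<subseteq> mons n" shows "finite (min_gens J)"
proof (rule finite_antichain[where K="{..n}"])
  fix b c i assume "b \<in> min_gens J" "c \<in> min_gens J" "i \<notin> {..n}"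
  then have "b \<in> mons n" "c \<in> mons n" "n < i" using assms by (auto simp: min_gens_def)
  then show "b i = c i" by (simp add: mons_def)
qed (auto simp: min_gens_def)

text \<open>Every element of J is divisible by a minimal generator: take a divisor in J of least degree.\<close>
lemma min_gen_below:
  assumes "J \<subseteq> mons n" and "\<alpha> \<in> J"
  shows "\<exists>g\<in>min_gens J. \<forall>i. g i \<le> \<alpha> i"
proof -
  let ?P = "\<lambda>\<beta>. \<beta> \<in> J \<and> (\<forall>i. \<beta> i \<le> \<alpha> i)"
  have "?P \<alpha>" using assms(2) by simp
  then obtain \<beta> where \<beta>: "?P \<beta>" and least: "\<forall>\<gamma>. ?P \<gamma> \<longrightarrow> mdeg n \<beta> \<le> mdeg n \<gamma>"
    using ex_has_least_nat[of ?P \<alpha> "mdeg n"] by blast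
  have "\<gamma> = \<beta>" if \<gamma>: "\<gamma> \<in> J" and le: "\<forall>i. \<gamma> i \<le> \<beta> i" for \<gamma>
  proof (rule ccontr)
    assume "\<gamma> \<noteq> \<beta>"
    then obtain i where i: "\<gamma> i \<noteq> \<beta> i" by (meson ext)
    have "i \<le> n"
    proof (rule ccontr)
      assume "\<not> i \<le> n"
      moreover have "\<gamma> \<in> mons n" "\<beta> \<in> mons n" using \<gamma> \<beta> assms(1) by auto
      ultimately show False using i by (simp add: mons_def)
    qed
    moreover have "\<gamma> i < \<beta> i" using i le by (meson le_neq_implies_less)
    ultimately have "mdeg n \<gamma> < mdeg n \<beta>"
      unfolding mdeg_def using le by (intro sum_strict_mono_ex1) auto
    moreover have "?P \<gamma>" using \<gamma> le \<beta> le_trans by blast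
    ultimately show False using least by (meson not_le)
  qed
  then have "\<beta> \<in> min_gens J" using \<beta> by (auto simp: min_gens_def)
  then show ?thesis using \<beta> by blast
qed

lemma mon_gen_min_gens:
  assumes "monomial_ideal n J" shows "mon_gen n (min_gens J) = J"
proof
  have "J \<subseteq> mons n" using assms by (simp add: monomial_ideal_def)
  then show "J \<subseteq> mon_gen n (min_gens J)"
    using min_gen_below unfolding mon_gen_def by blast
  show "mon_gen n (min_gens J) \<subseteq> J"
  proof
    fix \<gamma> assume "\<gamma> \<in> mon_gen n (min_gens J)"
    then obtain g where "\<gamma> \<in> mons n" "g \<in> J" "\<forall>i. g i \<le> \<gamma> i"
      by (auto simp: mon_gen_def min_gens_def)
    then show "\<gamma> \<in> J" using monomial_ideal_upward[OF assms] by blast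
  qed
qed

section \<open>The Hilbert polynomial of a monomial ideal\<close>

lemma card_multiples:
  assumes "\<beta> \<in> mons n" "mdeg n \<beta> \<le> s"
  shows "card (mon_gen n {\<beta>} \<inter> deg_mons n s) = card (deg_mons n (s - mdeg n \<beta>))"
proof -
  have mdeg_add: "mdeg n (\<lambda>i. \<gamma> i + \<beta> i) = mdeg n \<gamma> + mdeg n \<beta>" for \<gamma>
    unfolding mdeg_def by (simp add: sum.distrib)
  have mdeg_sub: "mdeg n (\<lambda>i. \<alpha> i - \<beta> i) = mdeg n \<alpha> - mdeg n \<beta>" if "\<forall>i. \<beta> i \<le> \<alpha> i" for \<alpha>
    unfolding mdeg_def using that by (simp add: sum_subtractf_nat)
  have "bij_betw (\<lambda>\<alpha> i. \<alpha> i - \<beta> i) (mon_gen n {\<beta>} \<inter> deg_mons n s) (deg_mons n (s - mdeg n \<beta>))"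
    by (rule bij_betw_byWitness[where f'="\<lambda>\<gamma> i. \<gamma> i + \<beta> i"])
       (use assms mdeg_add mdeg_sub in \<open>auto simp: mon_gen_def deg_mons_def mons_def\<close>)
  then show ?thesis by (rule bij_betw_same_card)
qed

lemma eventually_poly_multiples:
  assumes "\<beta> \<in> mons n"
  shows "eventually_poly (\<lambda>s. int (card (mon_gen n {\<beta>} \<inter> deg_mons n s)))"
proof (rule eventually_poly_cong)
  show "eventually_poly (\<lambda>s. if mdeg n \<beta> \<le> s then int (card (deg_mons n (s - mdeg n \<beta>))) else 0)"
    by (rule eventually_poly_shift[OF eventually_poly_card_deg_mons])
  fix s assume "mdeg n \<beta> \<le> s"
  then show "int (card (mon_gen n {\<beta>} \<inter> deg_mons n s))
      = (if mdeg n \<beta> \<le> s then int (card (deg_mons n (s - mdeg n \<beta>))) else 0)"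
    using card_multiples[OF assms] by simp
qed

lemma mon_gen_insert: "mon_gen n (insert g G) = mon_gen n {g} \<union> mon_gen n G"
  by (auto simp: mon_gen_def)

lemma mon_gen_Int: "mon_gen n {g} \<inter> mon_gen n G = mon_gen n ((\<lambda>h i. max (g i) (h i)) ` G)"
  by (auto simp: mon_gen_def)

text \<open>Inclusion-exclusion: the number of degree-s monomials in a finitely generated monomial
  ideal is eventually polynomial, by induction on the number of generators.\<close>
lemma eventually_poly_mon_gen:
  assumes "finite G" "G \<subseteq> mons n"
  shows "eventually_poly (\<lambda>s. int (card (mon_gen n G \<inter> deg_mons n s)))"
  using assms
proof (induction "card G" arbitrary: G rule: less_induct)
  case less
  show ?case
  proof (cases "G = {}")
    case True
    then show ?thesis by (simp add: mon_gen_def eventually_poly_const)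
  next
    case False
    then obtain g where "g \<in> G" by blast
    then obtain G' where G: "G = insert g G'" and g: "g \<notin> G'"
      by (meson mk_disjoint_insert)
    let ?lcms = "(\<lambda>h i. max (g i) (h i)) ` G'"
    let ?N = "\<lambda>H s. int (card (mon_gen n H \<inter> deg_mons n s))"
    have fin: "finite G'" using less.prems G by auto
    have card_G': "card G' < card G" using G g fin by simp
    have gm: "g \<in> mons n" and G'm: "G' \<subseteq> mons n" using less.prems(2) G by auto
    have "?lcms \<subseteq> mons n" using gm G'm by (auto simp: mons_def)
    moreover have "card ?lcms < card G"
      using card_image_le[OF fin, of "\<lambda>h i. max (g i) (h i)"] card_G' by linarith
    ultimately have lcms: "eventually_poly (?N ?lcms)"
      using less.hyps fin by blast
    have "?N G s = ?N {g} s + ?N G' s - ?N ?lcms s" for s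
    proof -
      have "finite (mon_gen n {g} \<inter> deg_mons n s)" "finite (mon_gen n G' \<inter> deg_mons n s)"
        using finite_deg_mons by auto
      moreover have "(mon_gen n {g} \<inter> deg_mons n s) \<union> (mon_gen n G' \<inter> deg_mons n s)
          = mon_gen n G \<inter> deg_mons n s"
        using G mon_gen_insert by blast
      moreover have "(mon_gen n {g} \<inter> deg_mons n s) \<inter> (mon_gen n G' \<inter> deg_mons n s)
          = mon_gen n ?lcms \<inter> deg_mons n s"
        using mon_gen_Int[of n g G'] by blast
      ultimately show ?thesis using card_Un_Int by fastforce
    qed
    then show ?thesis
      by (intro eventually_poly_cong[where m=0, OF eventually_poly_diff[OF eventually_poly_add[OF
            eventually_poly_multiples[OF gm] less.hyps[OF card_G' fin G'm]] lcms]]) simp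
  qed
qed

text \<open>The Hilbert function of S/J counts the degree-s monomials minus those in J; both counts
  are eventually polynomial, the latter since J is generated by its finitely many minimal generators.\<close>
lemma hilb_fun_eventually_poly:
  assumes "monomial_ideal n J" shows "eventually_poly (\<lambda>s. int (hilb_fun n J s))"
proof -
  have Jm: "J \<subseteq> mons n" using assms by (simp add: monomial_ideal_def)
  then have "min_gens J \<subseteq> mons n" by (auto simp: min_gens_def)
  then have inJ: "eventually_poly (\<lambda>s. int (card (J \<inter> deg_mons n s)))"
    using eventually_poly_mon_gen[OF finite_min_gens[OF Jm], of n] mon_gen_min_gens[OF assms] by simp
  have "int (hilb_fun n J s) = int (card (deg_mons n s)) - int (card (J \<inter> deg_mons n s))" for s
  proof -
    have "{\<alpha>\<in>mons n. mdeg n \<alpha> = s \<and> \<alpha> \<notin> J} = deg_mons n s - (J \<inter> deg_mons n s)"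
      by (auto simp: deg_mons_def)
    then show ?thesis
      unfolding hilb_fun_def by (simp add: card_Diff_subset card_mono finite_deg_mons of_nat_diff)
  qed
  then show ?thesis
    by (intro eventually_poly_cong[where m=0, OF eventually_poly_diff[OF eventually_poly_card_deg_mons inJ]])
       simp
qed

lemma poly_eq_if_eventually_eq:
  fixes p q :: "rat poly"
  assumes "\<forall>s\<ge>s0. poly p (of_nat s) = poly q (of_nat s)"
  shows "p = q"
proof (rule ccontr)
  assume "p \<noteq> q"
  then have "finite {x. poly (p - q) x = 0}" by (intro poly_roots_finite) simp
  moreover have "of_nat ` {s0..} \<subseteq> {x. poly (p - q) x = 0}" using assms by auto
  ultimately have "finite (of_nat ` {s0..} :: rat set)" using finite_subset by blast
  then have "finite {s0..}" by (simp add: finite_image_iff inj_on_def)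
  then show False using infinite_Ici by blast
qed

lemma hilb_poly_spec:
  assumes "monomial_ideal n J"
  shows "\<exists>s0. \<forall>s\<ge>s0. poly (hilb_poly n J) (of_nat s) = of_nat (hilb_fun n J s)"
proof -
  obtain p s0 where p: "\<forall>s\<ge>s0. poly p (of_nat s) = (of_nat (hilb_fun n J s) :: rat)"
    using hilb_fun_eventually_poly[OF assms] unfolding eventually_poly_def by auto
  have "hilb_poly n J = p"
    unfolding hilb_poly_def
  proof (rule the_equality)
    fix q assume "\<exists>s1. \<forall>s\<ge>s1. poly q (of_nat s) = (of_nat (hilb_fun n J s) :: rat)"
    then obtain s1 where "\<forall>s\<ge>s1. poly q (of_nat s) = (of_nat (hilb_fun n J s) :: rat)" by blast
    then have "\<forall>s\<ge>max s0 s1. poly q (of_nat s) = poly p (of_nat s)" using p by simp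
    then show "q = p" by (rule poly_eq_if_eventually_eq)
  qed (use p in blast)
  then show ?thesis using p by blast
qed

section \<open>The x_1-saturation as a colon ideal\<close>

definition mul_x01 :: "(nat \<Rightarrow> nat) \<Rightarrow> nat \<Rightarrow> nat \<Rightarrow> nat" where
  "mul_x01 \<gamma> k = (\<lambda>i. if i \<le> 1 then \<gamma> i + k else \<gamma> i)"

definition colon_x01 :: "nat \<Rightarrow> (nat \<Rightarrow> nat) set \<Rightarrow> (nat \<Rightarrow> nat) set" where
  "colon_x01 n J = {\<gamma>\<in>mons n. \<exists>k. mul_x01 \<gamma> k \<in> J}"

lemma mdeg_split: "1 \<le> n \<Longrightarrow> mdeg n f = f 0 + f 1 + (\<Sum>i\<in>{2..n}. f i)"
proof -
  assume "1 \<le> n"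
  then have "{..n} = insert 0 (insert 1 {2..n})" by auto
  then show ?thesis unfolding mdeg_def by simp
qed

lemma mul_x01_mons: "1 \<le> n \<Longrightarrow> \<gamma> \<in> mons n \<Longrightarrow> mul_x01 \<gamma> k \<in> mons n"
  by (simp add: mul_x01_def mons_def)

lemma mdeg_mul_x01: "1 \<le> n \<Longrightarrow> mdeg n (mul_x01 \<gamma> k) = mdeg n \<gamma> + 2 * k"
  using mdeg_split[of n "mul_x01 \<gamma> k"] mdeg_split[of n \<gamma>] by (simp add: mul_x01_def)

lemma sat01_eq_colon_x01:
  assumes n: "1 \<le> n" and J: "monomial_ideal n J"
  shows "sat01 n J = colon_x01 n J"
proof
  have Jm: "J \<subseteq> mons n" using J by (simp add: monomial_ideal_def)
  show "sat01 n J \<subseteq> colon_x01 n J"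
  proof
    fix \<gamma> assume "\<gamma> \<in> sat01 n J"
    then obtain g where \<gamma>: "\<gamma> \<in> mons n" and g: "g \<in> min_gens J"
      and le: "\<forall>i. (g(0 := 0, 1 := 0)) i \<le> \<gamma> i"
      unfolding sat01_def mon_gen_def by blast
    have "g i \<le> mul_x01 \<gamma> (g 0 + g 1) i" for i
      using le[rule_format, of i] by (cases "i = 0"; cases "i = 1") (auto simp: mul_x01_def)
    then have "mul_x01 \<gamma> (g 0 + g 1) \<in> J"
      using monomial_ideal_upward[OF J _ mul_x01_mons[OF n \<gamma>]] g by (auto simp: min_gens_def)
    then show "\<gamma> \<in> colon_x01 n J" using \<gamma> by (auto simp: colon_x01_def)
  qed
  show "colon_x01 n J \<subseteq> sat01 n J"
  proof
    fix \<gamma> assume "\<gamma> \<in> colon_x01 n J"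
    then obtain k where \<gamma>: "\<gamma> \<in> mons n" and k: "mul_x01 \<gamma> k \<in> J"
      by (auto simp: colon_x01_def)
    obtain g where g: "g \<in> min_gens J" and le: "\<forall>i. g i \<le> mul_x01 \<gamma> k i"
      using min_gen_below[OF Jm k] by blast
    have "\<forall>i. (g(0 := 0, 1 := 0)) i \<le> \<gamma> i"
    proof
      fix i show "(g(0 := 0, 1 := 0)) i \<le> \<gamma> i"
        using le[rule_format, of i] by (cases "i = 0"; cases "i = 1") (auto simp: mul_x01_def)
    qed
    then show "\<gamma> \<in> sat01 n J" using \<gamma> g unfolding sat01_def mon_gen_def by blast
  qed
qed

text \<open>If I is contained in J in all high degrees, then so are the colon ideals, everywhere:
  a high power of x_0 x_1 pushes any witness into the range where I is inside J.\<close>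
lemma colon_x01_mono:
  assumes n: "1 \<le> n" and I: "monomial_ideal n I"
    and high: "\<forall>\<alpha>\<in>I. mdeg n \<alpha> \<ge> s0 \<longrightarrow> \<alpha> \<in> J"
  shows "colon_x01 n I \<subseteq> colon_x01 n J"
proof
  fix \<gamma> assume "\<gamma> \<in> colon_x01 n I"
  then obtain k where \<gamma>: "\<gamma> \<in> mons n" and k: "mul_x01 \<gamma> k \<in> I"
    by (auto simp: colon_x01_def)
  have "mul_x01 \<gamma> (k + s0) \<in> I"
    by (rule monomial_ideal_upward[OF I k mul_x01_mons[OF n \<gamma>]]) (simp add: mul_x01_def)
  moreover have "mdeg n (mul_x01 \<gamma> (k + s0)) \<ge> s0" by (simp add: mdeg_mul_x01[OF n])
  ultimately have "mul_x01 \<gamma> (k + s0) \<in> J" using high by blast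
  then show "\<gamma> \<in> colon_x01 n J" using \<gamma> by (auto simp: colon_x01_def)
qed

section \<open>Counting the monomials of J outside I\<close>

lemma borel_x0_to_x1:
  assumes n: "1 \<le> n" and B: "borel_ideal n I"
  shows "\<alpha> \<in> I \<Longrightarrow> \<alpha>(0 := 0, 1 := \<alpha> 0 + \<alpha> 1) \<in> I"
proof (induction "\<alpha> 0" arbitrary: \<alpha>)
  case 0
  then have "\<alpha>(0 := 0, 1 := \<alpha> 0 + \<alpha> 1) = \<alpha>" by (simp add: fun_eq_iff)
  then show ?case using 0 by metis
next
  case (Suc t)
  define \<alpha>' where "\<alpha>' = \<alpha>(0 := \<alpha> 0 - 1, Suc 0 := \<alpha> (Suc 0) + 1)"
  have "\<alpha>' \<in> I"
    using B Suc.prems Suc.hyps(2) n unfolding borel_ideal_def \<alpha>'_def by force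
  moreover have "t = \<alpha>' 0" using Suc.hyps(2) by (simp add: \<alpha>'_def)
  ultimately have "\<alpha>'(0 := 0, 1 := \<alpha>' 0 + \<alpha>' 1) \<in> I" using Suc.hyps(1) by blast
  moreover have "\<alpha>'(0 := 0, 1 := \<alpha>' 0 + \<alpha>' 1) = \<alpha>(0 := 0, 1 := \<alpha> 0 + \<alpha> 1)"
    using Suc.hyps(2) by (simp add: \<alpha>'_def fun_eq_iff)
  ultimately show ?case by simp
qed

definition gap :: "nat \<Rightarrow> (nat \<Rightarrow> nat) set \<Rightarrow> (nat \<Rightarrow> nat) set \<Rightarrow> nat \<Rightarrow> (nat \<Rightarrow> nat) set" where
  "gap n I J s = {\<alpha>\<in>deg_mons n s. \<alpha> \<in> J \<and> \<alpha> \<notin> I}"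

lemma hilb_fun_gap:
  assumes "\<forall>\<alpha>\<in>I. mdeg n \<alpha> = s \<longrightarrow> \<alpha> \<in> J"
  shows "hilb_fun n I s = hilb_fun n J s + card (gap n I J s)"
proof -
  let ?outside_J = "{\<alpha>\<in>mons n. mdeg n \<alpha> = s \<and> \<alpha> \<notin> J}"
  have "{\<alpha>\<in>mons n. mdeg n \<alpha> = s \<and> \<alpha> \<notin> I} = ?outside_J \<union> gap n I J s"
    using assms by (auto simp: gap_def deg_mons_def)
  moreover have "finite ?outside_J" "finite (gap n I J s)"
    by (auto intro: finite_subset[OF _ finite_deg_mons[of n s]] simp: gap_def deg_mons_def)
  moreover have "?outside_J \<inter> gap n I J s = {}" by (auto simp: gap_def)
  ultimately show ?thesis unfolding hilb_fun_def by (simp add: card_Un_disjoint)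
qed

lemma hilb_fun_offset:
  assumes "monomial_ideal n I" "monomial_ideal n J"
    and "hilb_poly n I = hilb_poly n J + [:of_nat a:]"
  shows "\<exists>S. \<forall>s\<ge>S. hilb_fun n I s = hilb_fun n J s + a"
proof -
  obtain t1 where t1: "\<forall>s\<ge>t1. poly (hilb_poly n I) (of_nat s) = (of_nat (hilb_fun n I s) :: rat)"
    using hilb_poly_spec[OF assms(1)] by blast
  obtain t2 where t2: "\<forall>s\<ge>t2. poly (hilb_poly n J) (of_nat s) = (of_nat (hilb_fun n J s) :: rat)"
    using hilb_poly_spec[OF assms(2)] by blast
  have "hilb_fun n I s = hilb_fun n J s + a" if "max t1 t2 \<le> s" for s
  proof -
    have "(of_nat (hilb_fun n I s) :: rat) = poly (hilb_poly n J) (of_nat s) + of_nat a"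
      using t1 that assms(3) by simp
    also have "\<dots> = of_nat (hilb_fun n J s + a)" using t2 that by simp
    finally show ?thesis by (simp only: of_nat_eq_iff)
  qed
  then show ?thesis by blast
qed

text \<open>If gamma lies in J : (x_0 x_1)^oo via (x_0 x_1)^k but not in
  I : (x_0 x_1)^oo, then in degree |gamma| + 2k + r the r + 1 monomials
  x_0^(k+i) x_1^(k+r-i) x^gamma (0 <= i <= r) are in J; none is in I, since moving all x_0 to
  x_1 (allowed in the Borel ideal I) would put a multiple of gamma by a power of x_0 x_1 into I.\<close>
lemma card_gap_lower_bound:
  assumes n: "1 \<le> n" and I: "borel_ideal n I" and J: "monomial_ideal n J"
    and \<gamma>: "\<gamma> \<in> mons n" and k: "mul_x01 \<gamma> k \<in> J" and not_I: "\<gamma> \<notin> colon_x01 n I"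
  shows "Suc r \<le> card (gap n I J (mdeg n \<gamma> + 2 * k + r))"
proof -
  have mI: "monomial_ideal n I" using I by (simp add: borel_ideal_def)
  define \<delta> where "\<delta> = (\<lambda>i. (mul_x01 \<gamma> k)(0 := \<gamma> 0 + k + i, 1 := \<gamma> 1 + k + (r - i)))"
  have \<delta>_mons: "\<delta> i \<in> mons n" for i using \<gamma> n by (auto simp: \<delta>_def mul_x01_def mons_def)
  have "\<delta> i \<in> gap n I J (mdeg n \<gamma> + 2 * k + r)" if i: "i \<le> r" for i
  proof -
    have "(\<Sum>j\<in>{2..n}. \<delta> i j) = (\<Sum>j\<in>{2..n}. \<gamma> j)"
      by (rule sum.cong) (auto simp: \<delta>_def mul_x01_def)
    then have "mdeg n (\<delta> i) = mdeg n \<gamma> + 2 * k + r"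
      using mdeg_split[OF n, of "\<delta> i"] mdeg_split[OF n, of \<gamma>] i by (simp add: \<delta>_def)
    moreover have "\<delta> i \<in> J"
      by (rule monomial_ideal_upward[OF J k \<delta>_mons]) (simp add: \<delta>_def mul_x01_def)
    moreover have "\<delta> i \<notin> I"
    proof
      assume "\<delta> i \<in> I"
      then have "(\<delta> i)(0 := 0, 1 := \<delta> i 0 + \<delta> i 1) \<in> I" by (rule borel_x0_to_x1[OF n I])
      moreover have "\<forall>j. ((\<delta> i)(0 := 0, 1 := \<delta> i 0 + \<delta> i 1)) j \<le> mul_x01 \<gamma> (\<gamma> 0 + 2 * k + r) j"
        using i by (simp add: \<delta>_def mul_x01_def)
      ultimately have "mul_x01 \<gamma> (\<gamma> 0 + 2 * k + r) \<in> I"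
        using monomial_ideal_upward[OF mI _ mul_x01_mons[OF n \<gamma>]] by blast
      then show False using not_I \<gamma> by (auto simp: colon_x01_def)
    qed
    ultimately show ?thesis using \<delta>_mons by (simp add: gap_def deg_mons_def)
  qed
  then have "\<delta> ` {..r} \<subseteq> gap n I J (mdeg n \<gamma> + 2 * k + r)" by blast
  moreover have "finite (gap n I J (mdeg n \<gamma> + 2 * k + r))"
    by (rule finite_subset[OF _ finite_deg_mons]) (auto simp: gap_def)
  ultimately have "card (\<delta> ` {..r}) \<le> card (gap n I J (mdeg n \<gamma> + 2 * k + r))"
    by (rule card_mono[rotated])
  moreover have "inj_on \<delta> {..r}"
  proof (rule inj_onI)
    fix x y assume "\<delta> x = \<delta> y"
    then have "\<delta> x 0 = \<delta> y 0" by simp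
    then show "x = y" by (simp add: \<delta>_def)
  qed
  ultimately show ?thesis by (simp add: card_image)
qed

lemma colon_x01_subset_of_bounded_gap:
  assumes n: "1 \<le> n" and I: "borel_ideal n I" and J: "monomial_ideal n J"
    and bounded: "\<forall>s\<ge>T. card (gap n I J s) \<le> a"
  shows "colon_x01 n J \<subseteq> colon_x01 n I"
proof
  fix \<gamma> assume "\<gamma> \<in> colon_x01 n J"
  then obtain k where \<gamma>: "\<gamma> \<in> mons n" and k: "mul_x01 \<gamma> k \<in> J" by (auto simp: colon_x01_def)
  show "\<gamma> \<in> colon_x01 n I"
  proof (rule ccontr)
    let ?s = "mdeg n \<gamma> + 2 * k + (T + a)"
    assume "\<gamma> \<notin> colon_x01 n I"
    then have "Suc (T + a) \<le> card (gap n I J ?s)"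
      by (rule card_gap_lower_bound[OF n I J \<gamma> k])
    moreover have "card (gap n I J ?s) \<le> a" using bounded by simp
    ultimately show False by simp
  qed
qed

theorem mainTheorem12:
  fixes n :: nat and I J :: "(nat \<Rightarrow> nat) set" and a :: nat
  assumes "1 \<le> n"
    and "borel_ideal n I" and "borel_ideal n J"
    and "\<exists>s0. \<forall>\<alpha>\<in>I. mdeg n \<alpha> \<ge> s0 \<longrightarrow> \<alpha> \<in> J"
    and "hilb_poly n I = hilb_poly n J + [:of_nat a:]"
  shows "sat01 n I = sat01 n J"
proof -
  have mI: "monomial_ideal n I" and mJ: "monomial_ideal n J"
    using assms(2,3) by (auto simp: borel_ideal_def)
  obtain s0 where high: "\<forall>\<alpha>\<in>I. mdeg n \<alpha> \<ge> s0 \<longrightarrow> \<alpha> \<in> J" using assms(4) by blast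
  obtain S where offset: "\<forall>s\<ge>S. hilb_fun n I s = hilb_fun n J s + a"
    using hilb_fun_offset[OF mI mJ assms(5)] by blast
  have "card (gap n I J s) \<le> a" if "max s0 S \<le> s" for s
    using hilb_fun_gap[of I n s J] high offset that by simp
  then have "\<forall>s\<ge>max s0 S. card (gap n I J s) \<le> a" by blast
  then have "colon_x01 n J \<subseteq> colon_x01 n I"
    by (rule colon_x01_subset_of_bounded_gap[OF assms(1,2) mJ])
  then show ?thesis
    using colon_x01_mono[OF assms(1) mI high] sat01_eq_colon_x01[OF assms(1)] mI mJ by blast
qed

end
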